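(* For each $n$ let $m=m_n$ be the order of some element of $S_n$, and assume $m_n$ has a divisor $d_n$ with $3\leq d_n$ and $d_n=o(n^{1/2})$. Then there are functions $a(n)=o(n^{1/2})$ and $b(n)=o(n)$ such that the proportion of elements of order $m_n$ in $S_n$ having at most $a(n)$ fixed points and at most $b(n)$ $2$-cycles tends to $1$ as $n\to\infty$.
   Context: Asymptotic notation is with respect to $n\to\infty$. *)

theory Defs
  imports "HOL-Analysis.Analysis" "HOL-Combinatorics.Permutations" "HOL-Library.Landau_Symbols"
begin

text \<open>Elements of S_n are the permutations of {..<n}.\<close>

definition perm_order :: "(nat \<Rightarrow> nat) \<Rightarrow> nat" where
  "perm_order p = (LEAST k. 0 < k \<and> (p ^^ k) = id)"

definition num_fixed_points :: "nat \<Rightarrow> (nat \<Rightarrow> nat) \<Rightarrow> nat" where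
  "num_fixed_points n p = card {i. i < n \<and> p i = i}"

definition num_2cycles :: "nat \<Rightarrow> (nat \<Rightarrow> nat) \<Rightarrow> nat" where
  "num_2cycles n p = card {{i, p i} | i. i < n \<and> p i \<noteq> i \<and> p (p i) = i}"

end

(* Double counting inside the set P of permutations of {..<n} of order m, where d divides m
   and d >= 3.  If sigma in P has more than A >= 2d fixed points, each of the at least (A/2)^3
   lists xs = [x_1, ..., x_d] of distinct fixed points gives sigma o (x_1 ... x_d) in P, and
   (sigma, xs) is recovered from this permutation and x_1; so at most 8 n |P| / A^3 elements of P
   have more than A fixed points.  Likewise, if sigma has more than B >= 2d 2-cycles, replacing d
   of them, (x_i sigma x_i), by the two d-cycles (x_1 ... x_d) (sigma x_1 ... sigma x_d) keeps the
   order m, since a remaining 2-cycle keeps the order of the rest even; now (sigma, xs) is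
   recovered from the new permutation, x_1 and sigma x_1, so at most 8 n^2 |P| / B^3 elements
   have more than B 2-cycles.  Take A = 2d + n^(2/5) and B = 2d + n^(4/5). *)

theory Submission
  imports Defs "HOL-Combinatorics.Cycles" "HOL-Real_Asymp.Real_Asymp"
begin

lemma funpow_comp_disjoint_apply:
  assumes g: "g permutes B" and f: "inj f" and f_fix: "\<And>x. x \<in> B \<Longrightarrow> f x = x"
  shows "((f \<circ> g) ^^ k) x = (if x \<in> B then (g ^^ k) x else (f ^^ k) x)"
proof -
  have f_out: "f y \<notin> B" if "y \<notin> B" for y
    using that f_fix[of "f y"] inj_eq[OF f] by metis
  have fk_out: "(f ^^ j) x \<notin> B" if "x \<notin> B" for j
    using that by (induction j) (simp_all add: f_out)
  show ?thesis
  proof (induction k)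
    case (Suc k)
    show ?case
    proof (cases "x \<in> B")
      case True
      then have "(g ^^ Suc k) x \<in> B"
        using permutes_in_image[OF permutes_funpow[OF g]] by blast
      with True Suc.IH show ?thesis by (simp add: f_fix)
    next
      case False
      then have "g ((f ^^ k) x) = (f ^^ k) x"
        using fk_out permutes_not_in[OF g] by blast
      with False Suc.IH show ?thesis by simp
    qed
  qed simp
qed

lemma funpow_comp_disjoint_eq_id_iff:
  assumes g: "g permutes B" and f: "inj f" and f_fix: "\<And>x. x \<in> B \<Longrightarrow> f x = x"
  shows "(f \<circ> g) ^^ k = id \<longleftrightarrow> f ^^ k = id \<and> g ^^ k = id"
proof -
  note apply_eq = funpow_comp_disjoint_apply[OF assms, of k]
  have gk_out: "(g ^^ k) x = x" if "x \<notin> B" for x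
    using that permutes_not_in[OF permutes_funpow[OF g]] by blast
  have fk_in: "(f ^^ k) x = x" if "x \<in> B" for x
    using that by (induction k) (simp_all add: f_fix)
  show ?thesis
  proof
    assume "(f \<circ> g) ^^ k = id"
    then have pointwise: "(if x \<in> B then (g ^^ k) x else (f ^^ k) x) = x" for x
      using apply_eq by (metis id_apply)
    have "(g ^^ k) x = x" for x
      using pointwise[of x] gk_out[of x] by (cases "x \<in> B") simp_all
    moreover have "(f ^^ k) x = x" for x
      using pointwise[of x] fk_in[of x] by (cases "x \<in> B") simp_all
    ultimately show "f ^^ k = id \<and> g ^^ k = id" by auto
  next
    assume "f ^^ k = id \<and> g ^^ k = id"
    then show "(f \<circ> g) ^^ k = id"
      using apply_eq by (simp add: fun_eq_iff)
  qed
qed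

lemma funpow_eq_id_imp_even:
  assumes "f (f z) = z" "f z \<noteq> z" "f ^^ k = id"
  shows "even k"
proof -
  have "(f ^^ k) z = (if even k then z else f z)"
    by (induction k) (simp_all add: assms(1))
  with assms(2,3) show ?thesis by (metis id_apply)
qed

lemma perm_order_comp_disjoint:
  assumes "g permutes B" "inj f" "\<And>x. x \<in> B \<Longrightarrow> f x = x"
    and "\<And>k. f ^^ k = id \<Longrightarrow> g ^^ k = id"
  shows "perm_order (f \<circ> g) = perm_order f"
proof -
  have "(f \<circ> g) ^^ k = id \<longleftrightarrow> f ^^ k = id" for k
    using funpow_comp_disjoint_eq_id_iff[OF assms(1-3)] assms(4) by blast
  then show ?thesis by (simp add: perm_order_def)
qed

lemma perm_order_dvd_iff:
  assumes "permutation p"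
  shows "perm_order p dvd k \<longleftrightarrow> p ^^ k = id"
proof -
  obtain n where "p ^^ n = id" "0 < n"
    using permutation_is_nilpotent[OF assms] by blast
  then have pos: "0 < perm_order p" and order: "p ^^ perm_order p = id"
    unfolding perm_order_def by (metis (mono_tags, lifting) LeastI)+
  have pow_mult: "p ^^ (perm_order p * q) = id" for q
    by (metis funpow_mult id_funpow order)
  show ?thesis
  proof
    assume "perm_order p dvd k"
    then show "p ^^ k = id" using pow_mult by (auto elim: dvdE)
  next
    assume k: "p ^^ k = id"
    have "p ^^ k = p ^^ (perm_order p * (k div perm_order p)) \<circ> p ^^ (k mod perm_order p)"
      by (simp add: funpow_add[symmetric])
    with k have rem: "p ^^ (k mod perm_order p) = id"
      by (simp add: pow_mult)
    have "\<not> 0 < k mod perm_order p"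
    proof
      assume "0 < k mod perm_order p"
      then have "perm_order p \<le> k mod perm_order p"
        using rem unfolding perm_order_def by (intro Least_le) simp
      with mod_less_divisor[OF pos, of k] show False by simp
    qed
    then show "perm_order p dvd k" by (simp add: dvd_eq_mod_eq_0)
  qed
qed

lemma funpow_cycle_of_list_nth:
  assumes "distinct xs" "i < length xs"
  shows "(cycle_of_list xs ^^ k) (xs ! i) = xs ! ((k + i) mod length xs)"
proof -
  have "map (cycle_of_list xs ^^ k) xs ! i = rotate k xs ! i"
    by (simp only: cyclic_rotation[OF assms(1)])
  with assms(2) show ?thesis by (simp add: nth_rotate)
qed

lemma funpow_cycle_of_list_eq_id:
  assumes "distinct xs" "length xs dvd k"
  shows "cycle_of_list xs ^^ k = id"
proof
  fix x
  show "(cycle_of_list xs ^^ k) x = id x"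
  proof (cases "x \<in> set xs")
    case True
    then obtain i where i: "i < length xs" "x = xs ! i" by (auto simp: in_set_conv_nth)
    moreover have "(k + i) mod length xs = i"
      using assms(2) i(1) by (auto elim!: dvdE)
    ultimately show ?thesis using assms(1) by (simp add: funpow_cycle_of_list_nth)
  next
    case False
    then show ?thesis using permutes_not_in[OF permutes_funpow[OF cycle_permutes]] by simp
  qed
qed

lemma orbit_eq_cycle_list:
  assumes "distinct xs" "xs \<noteq> []" "\<And>x. x \<in> set xs \<Longrightarrow> h x = cycle_of_list xs x"
  shows "map (\<lambda>i. (h ^^ i) (hd xs)) [0..<length xs] = xs"
proof -
  let ?c = "cycle_of_list xs"
  have pow_eq: "(h ^^ i) x = (?c ^^ i) x" if "x \<in> set xs" for x i
  proof (induction i)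
    case (Suc i)
    have "(?c ^^ i) x \<in> set xs"
      using permutes_in_image[OF permutes_funpow[OF cycle_permutes[of xs]], of i x] that by simp
    with Suc.IH show ?case by (simp add: assms(3))
  qed simp
  show ?thesis
  proof (rule nth_equalityI)
    fix i assume "i < length (map (\<lambda>i. (h ^^ i) (hd xs)) [0..<length xs])"
    then have i: "i < length xs" by simp
    have "(h ^^ i) (xs ! 0) = xs ! i"
      using pow_eq[of "xs ! 0" i] funpow_cycle_of_list_nth[OF assms(1), of 0 i] i assms(2)
      by simp
    with i assms(2) show "map (\<lambda>i. (h ^^ i) (hd xs)) [0..<length xs] ! i = xs ! i"
      by (simp add: hd_conv_nth)
  qed simp
qed

lemma perm_order_comp_cycle_of_list:
  assumes "permutation \<sigma>" "distinct xs" "\<And>x. x \<in> set xs \<Longrightarrow> \<sigma> x = x"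
    and "length xs dvd perm_order \<sigma>"
  shows "perm_order (\<sigma> \<circ> cycle_of_list xs) = perm_order \<sigma>"
proof (rule perm_order_comp_disjoint[OF cycle_permutes])
  show "inj \<sigma>" using assms(1) permutation_bijective bij_is_inj by blast
  show "\<sigma> x = x" if "x \<in> set xs" for x using assms(3) that .
  fix k assume "\<sigma> ^^ k = id"
  then have "length xs dvd k"
    using assms(4) perm_order_dvd_iff[OF assms(1)] dvd_trans by blast
  then show "cycle_of_list xs ^^ k = id" by (rule funpow_cycle_of_list_eq_id[OF assms(2)])
qed

lemma comp_cycle_of_list_inj:
  assumes xs: "distinct xs" "xs \<noteq> []" "\<And>x. x \<in> set xs \<Longrightarrow> \<sigma> x = x"
    and xs': "distinct xs'" "\<And>x. x \<in> set xs' \<Longrightarrow> \<sigma>' x = x"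
    and len: "length xs' = length xs"
    and eq: "\<sigma> \<circ> cycle_of_list xs = \<sigma>' \<circ> cycle_of_list xs'" "hd xs = hd xs'"
  shows "\<sigma> = \<sigma>' \<and> xs = xs'"
proof -
  have recover:
    "map (\<lambda>i. ((\<rho> \<circ> cycle_of_list ys) ^^ i) (hd ys)) [0..<length ys] = ys"
    "\<rho> = (\<lambda>y. if y \<in> set ys then y else (\<rho> \<circ> cycle_of_list ys) y)"
    if "distinct ys" "ys \<noteq> []" "\<And>x. x \<in> set ys \<Longrightarrow> \<rho> x = x" for \<rho> ys
  proof -
    show "map (\<lambda>i. ((\<rho> \<circ> cycle_of_list ys) ^^ i) (hd ys)) [0..<length ys] = ys"
      by (rule orbit_eq_cycle_list[OF that(1,2)])
        (simp add: that(3) permutes_in_image[OF cycle_permutes])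
    show "\<rho> = (\<lambda>y. if y \<in> set ys then y else (\<rho> \<circ> cycle_of_list ys) y)"
      using that(3) by (auto simp: fun_eq_iff id_outside_supp)
  qed
  have "xs' \<noteq> []" using len xs(2) by auto
  note recover_xs = recover[OF xs] and recover_xs' = recover[OF xs'(1) this xs'(2)]
  have "xs = xs'" using recover_xs(1) recover_xs'(1) eq len by metis
  moreover have "\<sigma> = \<sigma>'" using recover_xs(2) recover_xs'(2) eq(1) \<open>xs = xs'\<close> by metis
  ultimately show ?thesis by simp
qed

section \<open>Joining 2-cycles into two long cycles\<close>

text \<open>For \<open>xs = [x\<^sub>1, \<dots>, x\<^sub>d]\<close>, the 2-cycles \<open>(x\<^sub>i \<sigma>x\<^sub>i)\<close> of \<open>\<sigma>\<close> are replaced by the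
  two \<open>d\<close>-cycles \<open>(x\<^sub>1 \<dots> x\<^sub>d)\<close> and \<open>(\<sigma>x\<^sub>1 \<dots> \<sigma>x\<^sub>d)\<close>; the left factor is \<open>\<sigma>\<close> with
  these 2-cycles removed.\<close>

definition join_two_cycles :: "('a \<Rightarrow> 'a) \<Rightarrow> 'a list \<Rightarrow> 'a \<Rightarrow> 'a" where
  "join_two_cycles \<sigma> xs =
     (\<sigma> \<circ> restrict_id \<sigma> (set xs \<union> \<sigma> ` set xs)) \<circ> (cycle_of_list (map \<sigma> xs) \<circ> cycle_of_list xs)"

locale two_cycle_list =
  fixes \<sigma> :: "'a \<Rightarrow> 'a" and xs :: "'a list"
  assumes inj: "inj \<sigma>" and distinct: "distinct xs"
    and involutive: "\<And>x. x \<in> set xs \<Longrightarrow> \<sigma> (\<sigma> x) = x"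
    and disjoint: "set xs \<inter> \<sigma> ` set xs = {}"
begin

abbreviation joined :: "'a set" where
  "joined \<equiv> set xs \<union> \<sigma> ` set xs"

lemma joined_involutive: "y \<in> joined \<Longrightarrow> \<sigma> y \<in> joined \<and> \<sigma> (\<sigma> y) = y"
  using involutive by auto

abbreviation remainder :: "'a \<Rightarrow> 'a" where
  "remainder \<equiv> \<sigma> \<circ> restrict_id \<sigma> joined"

lemma remainder_fixes: "y \<in> joined \<Longrightarrow> remainder y = y"
  using joined_involutive by simp

lemma remainder_comp_restrict_id: "remainder \<circ> restrict_id \<sigma> joined = \<sigma>"
  using joined_involutive by (auto simp: restrict_id_def fun_eq_iff)

lemma funpow_restrict_id_joined_even: "even k \<Longrightarrow> restrict_id \<sigma> joined ^^ k = id"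
proof (elim evenE)
  fix j assume "k = 2 * j"
  moreover have "restrict_id \<sigma> joined ^^ 2 = id"
    using joined_involutive by (auto simp: restrict_id_def fun_eq_iff numeral_2_eq_2)
  ultimately show "restrict_id \<sigma> joined ^^ k = id" by (simp add: funpow_mult[symmetric])
qed

lemma restrict_id_joined_permutes: "restrict_id \<sigma> joined permutes joined"
proof (rule permutes_restrict_id)
  have "\<sigma> ` joined \<subseteq> joined" using joined_involutive by blast
  moreover have "joined \<subseteq> \<sigma> ` joined" using joined_involutive by (metis image_eqI subsetI)
  ultimately show "bij_betw \<sigma> joined joined"
    using inj_on_subset[OF inj subset_UNIV] by (simp add: bij_betw_def)
qed

lemma distinct_partners: "distinct (map \<sigma> xs)"
  using distinct inj_on_subset[OF inj subset_UNIV] by (simp add: distinct_map)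

lemma join_two_cycles_apply:
  shows "x \<in> set xs \<Longrightarrow> join_two_cycles \<sigma> xs x = cycle_of_list xs x"
    and "x \<in> \<sigma> ` set xs \<Longrightarrow> join_two_cycles \<sigma> xs x = cycle_of_list (map \<sigma> xs) x"
    and "x \<notin> joined \<Longrightarrow> join_two_cycles \<sigma> xs x = \<sigma> x"
proof -
  show "join_two_cycles \<sigma> xs x = cycle_of_list xs x" if x: "x \<in> set xs"
  proof -
    let ?y = "cycle_of_list xs x"
    have "?y \<in> set xs" using permutes_in_image[OF cycle_permutes[of xs], of x] x by simp
    moreover from this have "cycle_of_list (map \<sigma> xs) ?y = ?y"
      using disjoint by (intro id_outside_supp) auto
    ultimately show ?thesis using remainder_fixes by (simp add: join_two_cycles_def)
  qed
  show "join_two_cycles \<sigma> xs x = cycle_of_list (map \<sigma> xs) x" if x: "x \<in> \<sigma> ` set xs"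
  proof -
    let ?y = "cycle_of_list (map \<sigma> xs) x"
    have "cycle_of_list xs x = x" using disjoint x by (intro id_outside_supp) auto
    moreover have "?y \<in> \<sigma> ` set xs"
      using permutes_in_image[OF cycle_permutes[of "map \<sigma> xs"], of x] x by simp
    ultimately show ?thesis using remainder_fixes by (simp add: join_two_cycles_def)
  qed
  show "join_two_cycles \<sigma> xs x = \<sigma> x" if "x \<notin> joined"
    using that by (simp add: join_two_cycles_def id_outside_supp)
qed

lemma joined_cycles_permutes:
  "cycle_of_list (map \<sigma> xs) \<circ> cycle_of_list xs permutes joined"
  by (intro permutes_compose permutes_subset[OF cycle_permutes]) auto

lemma funpow_joined_cycles_eq_id:
  assumes "length xs dvd k"
  shows "(cycle_of_list (map \<sigma> xs) \<circ> cycle_of_list xs) ^^ k = id"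
proof -
  have "inj (cycle_of_list (map \<sigma> xs))"
    using permutation_of_cycle permutation_bijective bij_is_inj by blast
  moreover have "cycle_of_list (map \<sigma> xs) x = x" if "x \<in> set xs" for x
    using that disjoint by (intro id_outside_supp) auto
  ultimately show ?thesis
    using funpow_comp_disjoint_eq_id_iff[OF cycle_permutes[of xs]] assms
      funpow_cycle_of_list_eq_id[OF distinct] funpow_cycle_of_list_eq_id[OF distinct_partners]
    by simp
qed

lemma join_two_cycles_permutes:
  assumes "\<sigma> permutes U"
  shows "join_two_cycles \<sigma> xs permutes U"
proof -
  have "x \<in> U" if "x \<in> set xs" for x
    using that disjoint permutes_not_in[OF assms, of x] by force
  then have joined_U: "joined \<subseteq> U" using permutes_in_image[OF assms] by auto
  note joined_cycles_permutes
  moreover have "remainder permutes U"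
    by (rule permutes_compose[OF permutes_subset[OF restrict_id_joined_permutes joined_U] assms])
  ultimately show ?thesis
    unfolding join_two_cycles_def by (metis permutes_compose permutes_subset joined_U)
qed

lemma join_two_cycles_orbits:
  assumes "xs \<noteq> []"
  shows "map (\<lambda>i. (join_two_cycles \<sigma> xs ^^ i) (hd xs)) [0..<length xs] = xs"
    and "map (\<lambda>i. (join_two_cycles \<sigma> xs ^^ i) (\<sigma> (hd xs))) [0..<length xs] = map \<sigma> xs"
proof -
  show "map (\<lambda>i. (join_two_cycles \<sigma> xs ^^ i) (hd xs)) [0..<length xs] = xs"
    by (rule orbit_eq_cycle_list[OF distinct assms join_two_cycles_apply(1)])
  have "map (\<lambda>i. (join_two_cycles \<sigma> xs ^^ i) (hd (map \<sigma> xs))) [0..<length (map \<sigma> xs)] = map \<sigma> xs"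
    using assms by (intro orbit_eq_cycle_list[OF distinct_partners]) (simp_all add: join_two_cycles_apply(2))
  with assms show "map (\<lambda>i. (join_two_cycles \<sigma> xs ^^ i) (\<sigma> (hd xs))) [0..<length xs] = map \<sigma> xs"
    by (simp add: hd_map)
qed

end

text \<open>The extra 2-cycle \<open>z\<close> keeps the order of the remainder even; hence the remainder has
  the same order as \<open>\<sigma>\<close>, which the joined cycles of length dividing it do not change.\<close>

lemma perm_order_join_two_cycles:
  fixes \<sigma> :: "nat \<Rightarrow> nat"
  assumes "two_cycle_list \<sigma> xs" and perm: "permutation \<sigma>" and dvd: "length xs dvd perm_order \<sigma>"
    and z: "\<sigma> (\<sigma> z) = z" "\<sigma> z \<noteq> z" "z \<notin> set xs \<union> \<sigma> ` set xs"
  shows "perm_order (join_two_cycles \<sigma> xs) = perm_order \<sigma>"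
proof -
  interpret two_cycle_list \<sigma> xs by fact
  have "permutation (restrict_id \<sigma> joined)"
    using permutes_imp_permutation[OF _ restrict_id_joined_permutes] by simp
  then have rem_perm: "permutation remainder" using perm by (simp add: permutation_compose)
  then have rem_inj: "inj remainder" using permutation_bijective bij_is_inj by blast
  have "\<sigma> z \<notin> joined" using joined_involutive[of "\<sigma> z"] z(1,3) by auto
  then have rem_z: "remainder z = \<sigma> z" "remainder (\<sigma> z) = z" using z by simp_all
  have "perm_order (remainder \<circ> restrict_id \<sigma> joined) = perm_order remainder"
  proof (rule perm_order_comp_disjoint[OF restrict_id_joined_permutes rem_inj remainder_fixes])
    fix k assume "remainder ^^ k = id"
    then have "even k" using funpow_eq_id_imp_even[of remainder z k] rem_z z(2) by simp
    then show "restrict_id \<sigma> joined ^^ k = id" by (rule funpow_restrict_id_joined_even)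
  qed
  then have order_rem: "perm_order remainder = perm_order \<sigma>"
    by (simp add: remainder_comp_restrict_id)
  have "perm_order (remainder \<circ> (cycle_of_list (map \<sigma> xs) \<circ> cycle_of_list xs))
      = perm_order remainder"
  proof (rule perm_order_comp_disjoint[OF joined_cycles_permutes rem_inj remainder_fixes])
    fix k assume "remainder ^^ k = id"
    then have "perm_order remainder dvd k" using perm_order_dvd_iff[OF rem_perm] by simp
    then have "length xs dvd k" using dvd_trans[OF dvd] order_rem by simp
    then show "(cycle_of_list (map \<sigma> xs) \<circ> cycle_of_list xs) ^^ k = id"
      by (rule funpow_joined_cycles_eq_id)
  qed
  with order_rem show ?thesis by (simp add: join_two_cycles_def)
qed

lemma join_two_cycles_determines:
  assumes "two_cycle_list \<sigma> xs" "two_cycle_list \<sigma>' xs"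
    and "map \<sigma> xs = map \<sigma>' xs" "join_two_cycles \<sigma> xs = join_two_cycles \<sigma>' xs"
  shows "\<sigma> = \<sigma>'"
proof
  interpret A: two_cycle_list \<sigma> xs by fact
  interpret B: two_cycle_list \<sigma>' xs by fact
  have on_xs: "\<sigma> x = \<sigma>' x" if "x \<in> set xs" for x
    using that assms(3) by (simp add: map_eq_conv)
  fix y
  show "\<sigma> y = \<sigma>' y"
  proof (cases "y \<in> set xs \<union> \<sigma> ` set xs")
    case True
    then consider "y \<in> set xs" | x where "x \<in> set xs" "y = \<sigma> x" by blast
    then show ?thesis
    proof cases
      case 1
      then show ?thesis by (rule on_xs)
    next
      case 2
      then show ?thesis using A.involutive[of x] B.involutive[of x] on_xs[of x] by simp
    qed
  next
    case False
    have "\<sigma> ` set xs = \<sigma>' ` set xs" using image_cong[OF refl on_xs] by simp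
    have "\<sigma> y = join_two_cycles \<sigma> xs y" using A.join_two_cycles_apply(3) False by simp
    also have "\<dots> = join_two_cycles \<sigma>' xs y" using assms(4) by simp
    also have "\<dots> = \<sigma>' y"
      using B.join_two_cycles_apply(3) False \<open>\<sigma> ` set xs = \<sigma>' ` set xs\<close> by simp
    finally show ?thesis .
  qed
qed

lemma join_two_cycles_inj:
  assumes "two_cycle_list \<sigma> xs" "two_cycle_list \<sigma>' xs'" "xs \<noteq> []" "length xs' = length xs"
    and eq: "join_two_cycles \<sigma> xs = join_two_cycles \<sigma>' xs'" "hd xs = hd xs'" "\<sigma> (hd xs) = \<sigma>' (hd xs')"
  shows "\<sigma> = \<sigma>' \<and> xs = xs'"
proof -
  interpret A: two_cycle_list \<sigma> xs by fact
  interpret B: two_cycle_list \<sigma>' xs' by fact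
  have "xs' \<noteq> []" using assms(3,4) by auto
  have "xs = map (\<lambda>i. (join_two_cycles \<sigma> xs ^^ i) (hd xs)) [0..<length xs]"
    using A.join_two_cycles_orbits(1)[OF assms(3)] by simp
  also have "\<dots> = map (\<lambda>i. (join_two_cycles \<sigma>' xs' ^^ i) (hd xs')) [0..<length xs']"
    using eq assms(4) by simp
  also have "\<dots> = xs'" using B.join_two_cycles_orbits(1)[OF \<open>xs' \<noteq> []\<close>] .
  finally have xs_eq: "xs = xs'" .
  have "map \<sigma> xs = map (\<lambda>i. (join_two_cycles \<sigma> xs ^^ i) (\<sigma> (hd xs))) [0..<length xs]"
    using A.join_two_cycles_orbits(2)[OF assms(3)] by simp
  also have "\<dots> = map (\<lambda>i. (join_two_cycles \<sigma>' xs' ^^ i) (\<sigma>' (hd xs'))) [0..<length xs']"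
    using eq assms(4) by simp
  also have "\<dots> = map \<sigma>' xs" using B.join_two_cycles_orbits(2)[OF \<open>xs' \<noteq> []\<close>] xs_eq by simp
  finally have "map \<sigma> xs = map \<sigma>' xs" .
  then have "\<sigma> = \<sigma>'"
    using join_two_cycles_determines assms(1,2) eq(1) xs_eq by blast
  with xs_eq show ?thesis by simp
qed

section \<open>Double counting\<close>

definition distinct_lists :: "nat \<Rightarrow> 'a set \<Rightarrow> 'a list set" where
  "distinct_lists d A = {xs. length xs = d \<and> distinct xs \<and> set xs \<subseteq> A}"

lemma card_distinct_lists_ge:
  assumes "3 \<le> d" "2 * d \<le> card A"
  shows "(real (card A) / 2) ^ 3 \<le> real (card (distinct_lists d A))"
proof -
  let ?k = "card A"
  have "finite A" using assms by (intro card_ge_0_finite) linarith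
  have factors: "real ?k / 2 \<le> real i" if "i \<in> {?k - d + 1..?k}" for i
  proof -
    from that assms have "?k - d + 1 \<le> i" "d \<le> ?k" by auto
    then have "real ?k - real d + 1 \<le> real i" by (simp add: of_nat_diff)
    with assms(2) show ?thesis by linarith
  qed
  have "(real ?k / 2) ^ 3 \<le> (real ?k / 2) ^ d"
    using assms by (intro power_increasing) auto
  also have "\<dots> = (\<Prod>i\<in>{?k - d + 1..?k}. real ?k / 2)"
    using assms by simp
  also have "\<dots> \<le> (\<Prod>i\<in>{?k - d + 1..?k}. real i)"
    using factors by (intro prod_mono) auto
  also have "\<dots> = real (card (distinct_lists d A))"
    using card_lists_distinct_length_eq[OF \<open>finite A\<close>] assms
    by (simp add: distinct_lists_def)
  finally show ?thesis .
qed

lemma card_mult_le_of_inj_on_Sigma: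
  assumes "finite X" "\<And>x. x \<in> X \<Longrightarrow> finite (L x)" "\<And>x. x \<in> X \<Longrightarrow> c \<le> real (card (L x))"
    and "inj_on \<Phi> (Sigma X L)" "\<Phi> ` Sigma X L \<subseteq> T" "finite T"
  shows "real (card X) * c \<le> real (card T)"
proof -
  have "real (card X) * c = (\<Sum>x\<in>X. c)" by simp
  also have "\<dots> \<le> (\<Sum>x\<in>X. real (card (L x)))" using assms(3) by (rule sum_mono)
  also have "\<dots> = real (card (Sigma X L))" using assms(1,2) by simp
  also have "\<dots> = real (card (\<Phi> ` Sigma X L))" using card_image[OF assms(4)] by simp
  also have "\<dots> \<le> real (card T)" using card_mono[OF assms(6,5)] by simp
  finally show ?thesis .
qed

lemma card_mult_le_of_inj_on_distinct_lists:
  assumes "finite X" "3 \<le> d" "real (2 * d) \<le> A" "\<And>x. x \<in> X \<Longrightarrow> A < real (card (R x))"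
    and "inj_on \<Phi> (Sigma X (\<lambda>x. distinct_lists d (R x)))"
    and "\<Phi> ` Sigma X (\<lambda>x. distinct_lists d (R x)) \<subseteq> T" "finite T"
  shows "real (card X) * (A / 2) ^ 3 \<le> real (card T)"
proof (rule card_mult_le_of_inj_on_Sigma[OF assms(1) _ _ assms(5-7)])
  fix x assume x: "x \<in> X"
  have "real (2 * d) < real (card (R x))" using assms(3) assms(4)[OF x] by linarith
  then have "2 * d < card (R x)" by (simp only: of_nat_less_iff)
  then have "finite (R x)" using card_ge_0_finite by force
  then show "finite (distinct_lists d (R x))"
    by (rule finite_subset[rotated, OF finite_lists_length_eq[of _ d]]) (auto simp: distinct_lists_def)
  have "(A / 2) ^ 3 \<le> (real (card (R x)) / 2) ^ 3"
    using assms(3) assms(4)[OF x] by (intro power_mono) auto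
  also have "\<dots> \<le> real (card (distinct_lists d (R x)))"
    using \<open>2 * d < card (R x)\<close> assms(2) by (intro card_distinct_lists_ge) auto
  finally show "(A / 2) ^ 3 \<le> real (card (distinct_lists d (R x)))" .
qed

definition perms_of_order :: "nat \<Rightarrow> nat \<Rightarrow> (nat \<Rightarrow> nat) set" where
  "perms_of_order n m = {p. p permutes {..<n} \<and> perm_order p = m}"

lemma finite_perms_of_order: "finite (perms_of_order n m)"
  unfolding perms_of_order_def
  by (rule finite_subset[OF _ finite_permutations[OF finite_lessThan]]) auto

lemma comp_cycle_of_list_mem_perms_of_order:
  assumes "\<sigma> \<in> perms_of_order n m" "xs \<in> distinct_lists d {i. i < n \<and> \<sigma> i = i}" "d dvd m"
  shows "\<sigma> \<circ> cycle_of_list xs \<in> perms_of_order n m"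
proof -
  have \<sigma>: "\<sigma> permutes {..<n}" "perm_order \<sigma> = m"
    and xs: "distinct xs" "length xs = d" "set xs \<subseteq> {i. i < n \<and> \<sigma> i = i}"
    using assms(1,2) by (auto simp: perms_of_order_def distinct_lists_def)
  have "permutation \<sigma>" using permutes_imp_permutation[OF _ \<sigma>(1)] by simp
  then have "perm_order (\<sigma> \<circ> cycle_of_list xs) = m"
    using perm_order_comp_cycle_of_list xs \<sigma>(2) assms(3) by auto
  moreover have "\<sigma> \<circ> cycle_of_list xs permutes {..<n}"
    using \<sigma>(1) xs(3) by (intro permutes_compose permutes_subset[OF cycle_permutes]) auto
  ultimately show ?thesis by (simp add: perms_of_order_def)
qed

lemma card_many_fixed_points_le:
  assumes "3 \<le> d" "d dvd m" "real (2 * d) \<le> A"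
  shows "real (card {\<sigma> \<in> perms_of_order n m. A < real (num_fixed_points n \<sigma>)}) * (A / 2) ^ 3
           \<le> real (card (perms_of_order n m)) * real n"
proof -
  let ?P = "perms_of_order n m"
  let ?fix = "\<lambda>\<sigma>. {i. i < n \<and> \<sigma> i = i}"
  let ?X = "{\<sigma> \<in> ?P. A < real (num_fixed_points n \<sigma>)}"
  let ?Sg = "Sigma ?X (\<lambda>\<sigma>. distinct_lists d (?fix \<sigma>))"
  let ?\<Phi> = "\<lambda>(\<sigma>, xs). (\<sigma> \<circ> cycle_of_list xs, hd xs)"
  have choice: "distinct xs" "length xs = d" "xs \<noteq> []" "set xs \<subseteq> ?fix \<sigma>"
    if "(\<sigma>, xs) \<in> ?Sg" for \<sigma> xs
    using that assms(1) by (auto simp: distinct_lists_def)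
  have "?\<Phi> (\<sigma>, xs) \<in> ?P \<times> {..<n}" if "(\<sigma>, xs) \<in> ?Sg" for \<sigma> xs
    using that choice[OF that] comp_cycle_of_list_mem_perms_of_order assms(2) hd_in_set by fastforce
  then have "?\<Phi> ` ?Sg \<subseteq> ?P \<times> {..<n}" by auto
  moreover have "\<sigma> = \<sigma>' \<and> xs = xs'"
    if "(\<sigma>, xs) \<in> ?Sg" "(\<sigma>', xs') \<in> ?Sg" "?\<Phi> (\<sigma>, xs) = ?\<Phi> (\<sigma>', xs')" for \<sigma> xs \<sigma>' xs'
    using choice[OF that(1)] choice[OF that(2)] that(3) by (intro comp_cycle_of_list_inj) auto
  then have "inj_on ?\<Phi> ?Sg" by (auto simp: inj_on_def)
  ultimately have "real (card ?X) * (A / 2) ^ 3 \<le> real (card (?P \<times> {..<n}))"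
    using finite_perms_of_order assms
    by (intro card_mult_le_of_inj_on_distinct_lists[where R = ?fix]) (auto simp: num_fixed_points_def)
  then show ?thesis by (simp add: card_cartesian_product)
qed

definition two_cycle_mins :: "nat \<Rightarrow> (nat \<Rightarrow> nat) \<Rightarrow> nat set" where
  "two_cycle_mins n \<sigma> = {i. i < n \<and> i < \<sigma> i \<and> \<sigma> (\<sigma> i) = i}"

lemma two_cycles_eq_image_two_cycle_mins:
  assumes "\<sigma> permutes {..<n}"
  shows "{{i, \<sigma> i} | i. i < n \<and> \<sigma> i \<noteq> i \<and> \<sigma> (\<sigma> i) = i} = (\<lambda>i. {i, \<sigma> i}) ` two_cycle_mins n \<sigma>"
proof (intro equalityI subsetI)
  fix s assume "s \<in> {{i, \<sigma> i} | i. i < n \<and> \<sigma> i \<noteq> i \<and> \<sigma> (\<sigma> i) = i}"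
  then obtain i where i: "s = {i, \<sigma> i}" "i < n" "\<sigma> i \<noteq> i" "\<sigma> (\<sigma> i) = i" by blast
  show "s \<in> (\<lambda>i. {i, \<sigma> i}) ` two_cycle_mins n \<sigma>"
  proof (cases "i < \<sigma> i")
    case True
    with i have "i \<in> two_cycle_mins n \<sigma>" by (simp add: two_cycle_mins_def)
    with i(1) show ?thesis by blast
  next
    case False
    have "\<sigma> i < n" using permutes_in_image[OF assms] i(2) by simp
    with False i have "\<sigma> i \<in> two_cycle_mins n \<sigma>" by (simp add: two_cycle_mins_def)
    moreover have "s = {\<sigma> i, \<sigma> (\<sigma> i)}" using i(1,4) by (simp add: insert_commute)
    ultimately show ?thesis by blast
  qed
next
  fix s assume "s \<in> (\<lambda>i. {i, \<sigma> i}) ` two_cycle_mins n \<sigma>"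
  then obtain i where "s = {i, \<sigma> i}" "i \<in> two_cycle_mins n \<sigma>" by blast
  moreover from this(2) have "i < n" "\<sigma> i \<noteq> i" "\<sigma> (\<sigma> i) = i"
    by (simp_all add: two_cycle_mins_def)
  ultimately show "s \<in> {{i, \<sigma> i} | i. i < n \<and> \<sigma> i \<noteq> i \<and> \<sigma> (\<sigma> i) = i}" by blast
qed

lemma num_2cycles_eq_card_two_cycle_mins:
  assumes "\<sigma> permutes {..<n}"
  shows "num_2cycles n \<sigma> = card (two_cycle_mins n \<sigma>)"
proof -
  have "inj_on (\<lambda>i. {i, \<sigma> i}) (two_cycle_mins n \<sigma>)"
  proof (rule inj_onI)
    fix x y assume x: "x \<in> two_cycle_mins n \<sigma>" and y: "y \<in> two_cycle_mins n \<sigma>"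
      and eq: "{x, \<sigma> x} = {y, \<sigma> y}"
    show "x = y"
    proof (rule ccontr)
      assume "x \<noteq> y"
      with eq have "x = \<sigma> y" "y = \<sigma> x" by (auto simp: doubleton_eq_iff)
      moreover have "x < \<sigma> x" "y < \<sigma> y" using x y by (simp_all add: two_cycle_mins_def)
      ultimately show False by linarith
    qed
  qed
  then show ?thesis
    by (simp add: num_2cycles_def two_cycles_eq_image_two_cycle_mins[OF assms] card_image)
qed

lemma two_cycle_list_two_cycle_mins:
  assumes "inj \<sigma>" "distinct xs" "set xs \<subseteq> two_cycle_mins n \<sigma>"
  shows "two_cycle_list \<sigma> xs"
proof
  show "\<sigma> (\<sigma> x) = x" if "x \<in> set xs" for x
    using that assms(3) by (auto simp: two_cycle_mins_def)
  have "\<sigma> x \<notin> set xs" if "x \<in> set xs" for x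
  proof
    assume "\<sigma> x \<in> set xs"
    with that assms(3) have "x < \<sigma> x" "\<sigma> x < \<sigma> (\<sigma> x)" "\<sigma> (\<sigma> x) = x"
      by (auto simp: two_cycle_mins_def)
    then show False by simp
  qed
  then show "set xs \<inter> \<sigma> ` set xs = {}" by blast
qed (use assms in auto)

lemma join_two_cycles_mem_perms_of_order:
  assumes "\<sigma> \<in> perms_of_order n m" "xs \<in> distinct_lists d (two_cycle_mins n \<sigma>)" "d dvd m"
    and "d < card (two_cycle_mins n \<sigma>)"
  shows "join_two_cycles \<sigma> xs \<in> perms_of_order n m"
proof -
  have \<sigma>: "\<sigma> permutes {..<n}" "perm_order \<sigma> = m"
    and xs: "distinct xs" "length xs = d" "set xs \<subseteq> two_cycle_mins n \<sigma>"
    using assms(1,2) by (auto simp: perms_of_order_def distinct_lists_def)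
  have "\<not> two_cycle_mins n \<sigma> \<subseteq> set xs"
  proof
    assume "two_cycle_mins n \<sigma> \<subseteq> set xs"
    then have "card (two_cycle_mins n \<sigma>) \<le> card (set xs)" by (intro card_mono) auto
    with assms(4) xs(2) distinct_card[OF xs(1)] show False by linarith
  qed
  then obtain z where z: "z \<in> two_cycle_mins n \<sigma>" "z \<notin> set xs" by blast
  have "z \<notin> \<sigma> ` set xs"
  proof
    assume "z \<in> \<sigma> ` set xs"
    then obtain x where "x \<in> set xs" "z = \<sigma> x" by blast
    with z(1) xs(3) show False by (auto simp: two_cycle_mins_def)
  qed
  have pairs: "two_cycle_list \<sigma> xs"
    by (rule two_cycle_list_two_cycle_mins[OF permutes_inj[OF \<sigma>(1)] xs(1,3)])
  have "permutation \<sigma>" using permutes_imp_permutation[OF _ \<sigma>(1)] by simp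
  with \<open>z \<notin> \<sigma> ` set xs\<close> have "perm_order (join_two_cycles \<sigma> xs) = m"
    using perm_order_join_two_cycles[OF pairs] z xs(2) \<sigma>(2) assms(3)
    by (auto simp: two_cycle_mins_def)
  moreover have "join_two_cycles \<sigma> xs permutes {..<n}"
    using two_cycle_list.join_two_cycles_permutes[OF pairs \<sigma>(1)] .
  ultimately show ?thesis by (simp add: perms_of_order_def)
qed

lemma card_many_2cycles_le:
  assumes "3 \<le> d" "d dvd m" "real (2 * d) \<le> B"
  shows "real (card {\<sigma> \<in> perms_of_order n m. B < real (num_2cycles n \<sigma>)}) * (B / 2) ^ 3
           \<le> real (card (perms_of_order n m)) * real n ^ 2"
proof -
  let ?P = "perms_of_order n m"
  let ?X = "{\<sigma> \<in> ?P. B < real (num_2cycles n \<sigma>)}"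
  let ?Sg = "Sigma ?X (\<lambda>\<sigma>. distinct_lists d (two_cycle_mins n \<sigma>))"
  let ?\<Phi> = "\<lambda>(\<sigma>, xs). (join_two_cycles \<sigma> xs, hd xs, \<sigma> (hd xs))"
  have many: "B < real (card (two_cycle_mins n \<sigma>))" if "\<sigma> \<in> ?X" for \<sigma>
    using that num_2cycles_eq_card_two_cycle_mins[of \<sigma> n] by (auto simp: perms_of_order_def)
  have choice: "\<sigma> permutes {..<n}" "length xs = d" "xs \<noteq> []" "set xs \<subseteq> two_cycle_mins n \<sigma>"
    "two_cycle_list \<sigma> xs" if "(\<sigma>, xs) \<in> ?Sg" for \<sigma> xs
  proof -
    show \<sigma>: "\<sigma> permutes {..<n}" "length xs = d" "xs \<noteq> []" "set xs \<subseteq> two_cycle_mins n \<sigma>"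
      using that assms(1) by (auto simp: perms_of_order_def distinct_lists_def)
    show "two_cycle_list \<sigma> xs"
      using that permutes_inj[OF \<sigma>(1)] \<sigma>(4)
      by (intro two_cycle_list_two_cycle_mins) (auto simp: distinct_lists_def)
  qed
  have "?\<Phi> (\<sigma>, xs) \<in> ?P \<times> {..<n} \<times> {..<n}" if "(\<sigma>, xs) \<in> ?Sg" for \<sigma> xs
  proof -
    have "d < card (two_cycle_mins n \<sigma>)" using many[of \<sigma>] that assms(3) by auto
    then have "join_two_cycles \<sigma> xs \<in> ?P"
      using that assms(2) by (intro join_two_cycles_mem_perms_of_order) auto
    moreover have "hd xs < n" "\<sigma> (hd xs) < n"
      using choice[OF that] hd_in_set permutes_in_image by (fastforce simp: two_cycle_mins_def)+
    ultimately show ?thesis by simp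
  qed
  then have "?\<Phi> ` ?Sg \<subseteq> ?P \<times> {..<n} \<times> {..<n}" by auto
  moreover have "\<sigma> = \<sigma>' \<and> xs = xs'"
    if "(\<sigma>, xs) \<in> ?Sg" "(\<sigma>', xs') \<in> ?Sg" "?\<Phi> (\<sigma>, xs) = ?\<Phi> (\<sigma>', xs')" for \<sigma> xs \<sigma>' xs'
    using choice[OF that(1)] choice[OF that(2)] that(3) by (intro join_two_cycles_inj) auto
  then have "inj_on ?\<Phi> ?Sg" by (auto simp: inj_on_def)
  ultimately have "real (card ?X) * (B / 2) ^ 3 \<le> real (card (?P \<times> {..<n} \<times> {..<n}))"
    using finite_perms_of_order assms many
    by (intro card_mult_le_of_inj_on_distinct_lists[where R = "two_cycle_mins n"]) auto
  then show ?thesis by (simp add: card_cartesian_product power2_eq_square)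
qed

lemma proportion_few_fixed_points_and_2cycles_ge:
  assumes "3 \<le> d" "d dvd m" "perms_of_order n m \<noteq> {}" "0 < u" "0 < v"
  shows "1 - 8 * real n / u ^ 3 - 8 * real n ^ 2 / v ^ 3
    \<le> real (card {p \<in> perms_of_order n m. real (num_fixed_points n p) \<le> 2 * real d + u
                                         \<and> real (num_2cycles n p) \<le> 2 * real d + v})
      / real (card (perms_of_order n m))"
proof -
  let ?P = "perms_of_order n m"
  let ?G = "{p \<in> ?P. real (num_fixed_points n p) \<le> 2 * real d + u \<and> real (num_2cycles n p) \<le> 2 * real d + v}"
  let ?F = "{p \<in> ?P. 2 * real d + u < real (num_fixed_points n p)}"
  let ?T = "{p \<in> ?P. 2 * real d + v < real (num_2cycles n p)}"
  have "real (card ?F) * (u / 2) ^ 3 \<le> real (card ?F) * ((2 * real d + u) / 2) ^ 3"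
    using assms(4) by (intro mult_left_mono power_mono) auto
  also have "\<dots> \<le> real (card ?P) * real n"
    using assms(1,2,4) by (intro card_many_fixed_points_le) auto
  finally have F: "real (card ?F) \<le> 8 * real n / u ^ 3 * real (card ?P)"
    using assms(4) by (simp add: power_divide field_simps)
  have "real (card ?T) * (v / 2) ^ 3 \<le> real (card ?T) * ((2 * real d + v) / 2) ^ 3"
    using assms(5) by (intro mult_left_mono power_mono) auto
  also have "\<dots> \<le> real (card ?P) * real n ^ 2"
    using assms(1,2,5) by (intro card_many_2cycles_le) auto
  finally have T: "real (card ?T) \<le> 8 * real n ^ 2 / v ^ 3 * real (card ?P)"
    using assms(5) by (simp add: power_divide field_simps)
  have "?P \<subseteq> ?G \<union> ?F \<union> ?T" by auto
  then have "card ?P \<le> card (?G \<union> ?F \<union> ?T)"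
    using finite_perms_of_order by (intro card_mono) auto
  also have "\<dots> \<le> card ?G + card ?F + card ?T"
    by (meson add_le_mono card_Un_le le_refl order_trans)
  finally have "real (card ?P) \<le> real (card ?G) + real (card ?F) + real (card ?T)"
    by linarith
  with F T have "(1 - 8 * real n / u ^ 3 - 8 * real n ^ 2 / v ^ 3) * real (card ?P) \<le> real (card ?G)"
    by (simp add: algebra_simps)
  moreover have "0 < card ?P"
    using assms(3) finite_perms_of_order card_gt_0_iff by blast
  ultimately show ?thesis by (simp add: pos_le_divide_eq)
qed

lemma tendsto_proportion_few_fixed_points_and_2cycles:
  fixes m d :: "nat \<Rightarrow> nat"
  assumes order: "eventually (\<lambda>n. \<exists>p. p permutes {..<n} \<and> perm_order p = m n) at_top"
    and div: "eventually (\<lambda>n. d n dvd m n \<and> 3 \<le> d n) at_top"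
  shows "((\<lambda>n. real (card {p. p permutes {..<n} \<and> perm_order p = m n \<and>
                    real (num_fixed_points n p) \<le> 2 * real (d n) + real n powr (2/5) \<and>
                    real (num_2cycles n p) \<le> 2 * real (d n) + real n powr (4/5)})
             / real (card {p. p permutes {..<n} \<and> perm_order p = m n})) \<longlongrightarrow> 1) at_top"
    (is "(?r \<longlongrightarrow> 1) at_top")
proof -
  let ?lower = "\<lambda>n::nat. 1 - 8 * real n / (real n powr (2/5)) ^ 3 - 8 * real n ^ 2 / (real n powr (4/5)) ^ 3"
  have lower: "eventually (\<lambda>n. ?lower n \<le> ?r n) at_top"
    using order div eventually_gt_at_top[of 0]
  proof eventually_elim
    case (elim n)
    then have "?lower n \<le> real (card {p \<in> perms_of_order n (m n).
        real (num_fixed_points n p) \<le> 2 * real (d n) + real n powr (2/5) \<and>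
        real (num_2cycles n p) \<le> 2 * real (d n) + real n powr (4/5)})
      / real (card (perms_of_order n (m n)))"
      by (intro proportion_few_fixed_points_and_2cycles_ge) (auto simp: perms_of_order_def)
    then show ?case by (simp add: perms_of_order_def conj_assoc)
  qed
  have upper: "?r n \<le> 1" for n
  proof -
    have "card {p. p permutes {..<n} \<and> perm_order p = m n \<and>
                 real (num_fixed_points n p) \<le> 2 * real (d n) + real n powr (2/5) \<and>
                 real (num_2cycles n p) \<le> 2 * real (d n) + real n powr (4/5)}
          \<le> card {p. p permutes {..<n} \<and> perm_order p = m n}"
      using finite_perms_of_order[of n "m n"] by (intro card_mono) (auto simp: perms_of_order_def)
    then show ?thesis by (auto simp: divide_le_eq_1)
  qed
  have "(?lower \<longlongrightarrow> 1) at_top" by real_asymp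
  then show ?thesis
    by (rule tendsto_sandwich[OF lower always_eventually[OF allI[OF upper]] _ tendsto_const])
qed

theorem lemma5p7:
  fixes m d :: "nat \<Rightarrow> nat"
  assumes order: "eventually (\<lambda>n. \<exists>p. p permutes {..<n} \<and> perm_order p = m n) at_top"
    and div: "eventually (\<lambda>n. d n dvd m n \<and> 3 \<le> d n) at_top"
    and small: "(\<lambda>n. real (d n)) \<in> o(\<lambda>n. sqrt (real n))"
  shows "\<exists>a b :: nat \<Rightarrow> real.
           a \<in> o(\<lambda>n. sqrt (real n)) \<and> b \<in> o(\<lambda>n. real n) \<and>
           ((\<lambda>n. real (card {p. p permutes {..<n} \<and> perm_order p = m n \<and>
                        real (num_fixed_points n p) \<le> a n \<and> real (num_2cycles n p) \<le> b n})
                 / real (card {p. p permutes {..<n} \<and> perm_order p = m n}))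
             \<longlongrightarrow> 1) at_top"
proof -
  define a :: "nat \<Rightarrow> real" where "a n = 2 * real (d n) + real n powr (2/5)" for n
  define b :: "nat \<Rightarrow> real" where "b n = 2 * real (d n) + real n powr (4/5)" for n
  have d2: "(\<lambda>n. 2 * real (d n)) \<in> o(\<lambda>n. sqrt (real n))"
    using small by (subst landau_o.small.cmult_in_iff) auto
  have "(\<lambda>n::nat. real n powr (2/5)) \<in> o(\<lambda>n. sqrt (real n))" by real_asymp
  with d2 have a: "a \<in> o(\<lambda>n. sqrt (real n))" unfolding a_def[abs_def] by (rule sum_in_smallo)
  have "(\<lambda>n::nat. sqrt (real n)) \<in> o(\<lambda>n. real n)" by real_asymp
  with d2 have "(\<lambda>n. 2 * real (d n)) \<in> o(\<lambda>n. real n)" by (rule landau_o.small_trans)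
  moreover have "(\<lambda>n::nat. real n powr (4/5)) \<in> o(\<lambda>n. real n)" by real_asymp
  ultimately have b: "b \<in> o(\<lambda>n. real n)" unfolding b_def[abs_def] by (rule sum_in_smallo)
  show ?thesis
    using a b tendsto_proportion_few_fixed_points_and_2cycles[OF order div, folded a_def b_def]
    by blast
qed

end
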